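(* Let $f:\mathbb{R}^n\to\overline{\mathbb{R}}$ be a proper function that is ADC associated with a sequence $\{f^k=g^k-h^k\}$ (in any of the pointwise, epigraphical or continuous senses), and let $\bar x\notin\operatorname{dom} f$. If for every sequence $x^k\to\bar x$ one has $x^k\notin\operatorname{dom} f^k$ for all sufficiently large $k$, then $\partial_A f(\bar x)=\emptyset$. Moreover, this condition on sequences is satisfied whenever $\operatorname{dom} f$ is closed and $\operatorname{dom} f^k\subset\operatorname{dom} f$ for all sufficiently large $k$.
   Context: $\overline{\mathbb{R}}=\mathbb{R}\cup\{\pm\infty\}$. A proper function $f^k:\mathbb{R}^n\to\overline{\mathbb{R}}$ is DC on its domain if there are proper, lsc, convex $g^k,h^k:\mathbb{R}^n\to\overline{\mathbb{R}}$ with $\operatorname{dom} f^k=\operatorname{dom} g^k\cap\operatorname{dom} h^k$ and $f^k=g^k-h^k$ on $\operatorname{dom} f^k$; we write $f^k=g^k-h^k$ for such a decomposition. A proper $f$ is ADC associated with $\{f^k\}$ if the $f^k$ are proper, DC on their domains, and $f^k\to f$ pointwise (p-ADC), or epigraphically (e-ADC), or continuously (c-ADC: $f^k(x^k)\to f(x)$ whenever $x^k\to x$). For sets $C^k\subset\mathbb{R}^n$, $\operatorname{Lim\,sup}_k C^k=\{u:\exists$ infinite $N\subset\mathbb{N}$ and $u^k\in C^k$ with $u^k\to u$ along $N\}$. The approximate subdifferential (associated with $\{f^k=g^k-h^k\}$) is $\partial_A f(\bar x)=\bigcup_{x^k\to\bar x}\operatorname{Lim\,sup}_{k\to\infty}[\partial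 g^k(x^k)-\partial h^k(x^k)]$, where $\partial$ is the convex subdifferential (empty outside the domain), and Minkowski sums/differences with $\emptyset$ are $\emptyset$. *)

theory Defs
  imports "HOL-Analysis.Analysis" "HOL-Library.Extended_Real"
begin

definition edom :: "('a \<Rightarrow> ereal) \<Rightarrow> 'a set" where
  "edom f = {x. f x < \<infinity>}"

definition proper_fun :: "('a \<Rightarrow> ereal) \<Rightarrow> bool" where
  "proper_fun f \<longleftrightarrow> (\<forall>x. f x \<noteq> -\<infinity>) \<and> (\<exists>x. f x < \<infinity>)"

definition lsc_fun :: "('a::topological_space \<Rightarrow> ereal) \<Rightarrow> bool" where
  "lsc_fun f \<longleftrightarrow> (\<forall>x s. s \<longlonglongrightarrow> x \<longrightarrow> f x \<le> liminf (\<lambda>k. f (s k)))"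

definition convex_efun :: "('a::real_vector \<Rightarrow> ereal) \<Rightarrow> bool" where
  "convex_efun f \<longleftrightarrow> (\<forall>x y t. 0 < t \<and> t < 1 \<longrightarrow>
      f ((1 - t) *\<^sub>R x + t *\<^sub>R y) \<le> ereal (1 - t) * f x + ereal t * f y)"

definition subdiff :: "('a::real_inner \<Rightarrow> ereal) \<Rightarrow> 'a \<Rightarrow> 'a set" where
  "subdiff g x = (if x \<in> edom g then {v. \<forall>y. g y \<ge> g x + ereal (inner v (y - x))} else {})"

definition set_minus :: "'a::ab_group_add set \<Rightarrow> 'a set \<Rightarrow> 'a set" where
  "set_minus A B = {a - b | a b. a \<in> A \<and> b \<in> B}"

definition LimSup_sets :: "(nat \<Rightarrow> 'a::topological_space set) \<Rightarrow> 'a set" where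
  "LimSup_sets C = {u. \<exists>r w. strict_mono r \<and> (\<forall>j. w j \<in> C (r j)) \<and> w \<longlonglongrightarrow> u}"

definition approx_subdiff ::
  "(nat \<Rightarrow> 'a::euclidean_space \<Rightarrow> ereal) \<Rightarrow> (nat \<Rightarrow> 'a \<Rightarrow> ereal) \<Rightarrow> 'a \<Rightarrow> 'a set" where
  "approx_subdiff g h xb =
     (\<Union>x \<in> {x. x \<longlonglongrightarrow> xb}. LimSup_sets (\<lambda>k. set_minus (subdiff (g k) (x k)) (subdiff (h k) (x k))))"

definition pw_conv :: "(nat \<Rightarrow> 'a \<Rightarrow> ereal) \<Rightarrow> ('a \<Rightarrow> ereal) \<Rightarrow> bool" where
  "pw_conv fk f \<longleftrightarrow> (\<forall>x. (\<lambda>k. fk k x) \<longlonglongrightarrow> f x)"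

definition epi_conv :: "(nat \<Rightarrow> 'a::topological_space \<Rightarrow> ereal) \<Rightarrow> ('a \<Rightarrow> ereal) \<Rightarrow> bool" where
  "epi_conv fk f \<longleftrightarrow> (\<forall>x.
      (\<forall>s. s \<longlonglongrightarrow> x \<longrightarrow> f x \<le> liminf (\<lambda>k. fk k (s k))) \<and>
      (\<exists>s. s \<longlonglongrightarrow> x \<and> limsup (\<lambda>k. fk k (s k)) \<le> f x))"

definition cont_conv :: "(nat \<Rightarrow> 'a::topological_space \<Rightarrow> ereal) \<Rightarrow> ('a \<Rightarrow> ereal) \<Rightarrow> bool" where
  "cont_conv fk f \<longleftrightarrow> (\<forall>x s. s \<longlonglongrightarrow> x \<longrightarrow> (\<lambda>k. fk k (s k)) \<longlonglongrightarrow> f x)"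

definition dc_decomp :: "('a::euclidean_space \<Rightarrow> ereal) \<Rightarrow> ('a \<Rightarrow> ereal) \<Rightarrow> ('a \<Rightarrow> ereal) \<Rightarrow> bool" where
  "dc_decomp fk g h \<longleftrightarrow> proper_fun g \<and> lsc_fun g \<and> convex_efun g \<and>
     proper_fun h \<and> lsc_fun h \<and> convex_efun h \<and>
     edom fk = edom g \<inter> edom h \<and> (\<forall>x \<in> edom fk. fk x = g x - h x)"

end

theory Submission
  imports Defs
begin

(* If every sequence x^k \<longrightarrow> xb eventually leaves dom f^k = dom g^k \<inter> dom h^k, then one of
   the two convex subdifferentials at x^k is eventually empty, so the difference sets
   subdiff g^k (x^k) - subdiff h^k (x^k) are eventually empty and have no cluster points.
   The sufficient condition holds because the open complement of a closed dom f contains xb,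
   so every x^k \<longrightarrow> xb eventually lies outside dom f, which eventually contains dom f^k. *)

lemma set_minus_empty_iff: "set_minus A B = {} \<longleftrightarrow> A = {} \<or> B = {}"
  unfolding set_minus_def by auto

lemma subdiff_outside_edom: "x \<notin> edom g \<Longrightarrow> subdiff g x = {}"
  unfolding subdiff_def by simp

lemma dc_decomp_subdiff_diff_outside_edom:
  assumes "dc_decomp f g h" and "x \<notin> edom f"
  shows "set_minus (subdiff g x) (subdiff h x) = {}"
proof -
  have "x \<notin> edom g \<or> x \<notin> edom h"
    using assms unfolding dc_decomp_def by blast
  then show ?thesis
    by (auto simp: set_minus_empty_iff subdiff_outside_edom)
qed

lemma LimSup_sets_eventually_empty:
  assumes "\<forall>\<^sub>F k in sequentially. C k = {}"
  shows "LimSup_sets C = {}"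
proof (rule ccontr)
  assume "LimSup_sets C \<noteq> {}"
  then obtain u where "u \<in> LimSup_sets C"
    by blast
  then obtain r w where r: "strict_mono r" and w: "\<And>j::nat. w j \<in> C (r j)"
    unfolding LimSup_sets_def by blast
  from assms obtain N where "\<And>k. k \<ge> N \<Longrightarrow> C k = {}"
    unfolding eventually_sequentially by blast
  moreover have "r N \<ge> N"
    using r by (rule seq_suble)
  ultimately show False
    using w[of N] by simp
qed

lemma approx_subdiff_eq_empty:
  assumes dc: "\<And>k. dc_decomp (fk k) (gk k) (hk k)"
    and leaves: "\<And>x. x \<longlonglongrightarrow> xb \<Longrightarrow> \<forall>\<^sub>F k in sequentially. x k \<notin> edom (fk k)"
  shows "approx_subdiff gk hk xb = {}"
proof -
  have "LimSup_sets (\<lambda>k. set_minus (subdiff (gk k) (x k)) (subdiff (hk k) (x k))) = {}"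
    if "x \<longlonglongrightarrow> xb" for x
    using leaves[OF that]
    by (intro LimSup_sets_eventually_empty, elim eventually_mono)
       (rule dc_decomp_subdiff_diff_outside_edom[OF dc])
  then show ?thesis
    unfolding approx_subdiff_def by auto
qed

lemma eventually_notin_eventually_subset_closed:
  fixes x :: "nat \<Rightarrow> 'a::topological_space"
  assumes "closed S" and "xb \<notin> S" and "x \<longlonglongrightarrow> xb"
    and "\<forall>\<^sub>F k in sequentially. A k \<subseteq> S"
  shows "\<forall>\<^sub>F k in sequentially. x k \<notin> A k"
proof -
  have "\<forall>\<^sub>F k in sequentially. x k \<in> - S"
    using assms(1-3) by (intro topological_tendstoD) auto
  with assms(4) show ?thesis
    by eventually_elim auto
qed

theorem proposition2p4:
  fixes f :: "'a::euclidean_space \<Rightarrow> ereal"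
    and fk gk hk :: "nat \<Rightarrow> 'a \<Rightarrow> ereal"
    and xb :: 'a
  assumes "proper_fun f"
    and "\<And>k. proper_fun (fk k)"
    and "\<And>k. dc_decomp (fk k) (gk k) (hk k)"
    and "pw_conv fk f \<or> epi_conv fk f \<or> cont_conv fk f"
    and "xb \<notin> edom f"
  shows "((\<forall>x. x \<longlonglongrightarrow> xb \<longrightarrow> (\<forall>\<^sub>F k in sequentially. x k \<notin> edom (fk k)))
            \<longrightarrow> approx_subdiff gk hk xb = {})
       \<and> ((closed (edom f) \<and> (\<forall>\<^sub>F k in sequentially. edom (fk k) \<subseteq> edom f))
            \<longrightarrow> (\<forall>x. x \<longlonglongrightarrow> xb \<longrightarrow> (\<forall>\<^sub>F k in sequentially. x k \<notin> edom (fk k))))"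
proof (intro conjI impI allI)
  assume "\<forall>x. x \<longlonglongrightarrow> xb \<longrightarrow> (\<forall>\<^sub>F k in sequentially. x k \<notin> edom (fk k))"
  then show "approx_subdiff gk hk xb = {}"
    using approx_subdiff_eq_empty[of fk gk hk xb] assms(3) by blast
next
  fix x :: "nat \<Rightarrow> 'a"
  assume "closed (edom f) \<and> (\<forall>\<^sub>F k in sequentially. edom (fk k) \<subseteq> edom f)"
    and "x \<longlonglongrightarrow> xb"
  then show "\<forall>\<^sub>F k in sequentially. x k \<notin> edom (fk k)"
    using eventually_notin_eventually_subset_closed[where A = "\<lambda>k. edom (fk k)"] assms(5)
    by blast
qed

end
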